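(* Let $J_{\mathrm{SK}}\subseteq\mathbb{Z}\mathfrak{S}$ be the $\mathbb{Z}$-span of all $u-v$ with $u,v$ permutations of the same size satisfying $u\equiv_{\mathrm{SK}}v$. Then $J_{\mathrm{SK}}$ is a right ideal and a coideal of the Malvenuto–Reutenauer Hopf algebra $(\mathbb{Z}\mathfrak{S},*,\Delta)$. Consequently, $\mathsf{SPR}:=\mathbb{Z}\mathfrak{S}/J_{\mathrm{SK}}$ is a right $\mathsf{PR}$-module and a quotient coalgebra of $\mathsf{PR}$.
   Context: $\mathbb{Z}\mathfrak{S}=\bigoplus_{n\ge0}\mathbb{Z}\mathfrak{S}_n$, permutations viewed as words. For a word $w$ of length $n$ over a totally ordered alphabet, $\mathrm{alph}(w)$ is its set of letters and $\mathrm{st}(w)\in\mathfrak{S}_n$ is the permutation with $\mathrm{st}(w)(i)<\mathrm{st}(w)(j)$ iff $w_i<w_j$, or $w_i=w_j$ and $i<j$. For $I\subseteq[n]$, $w|_I$ is the subword of $w$ consisting of the letters in $I$. The product and coproduct are: for $w\in\mathfrak{S}_p$, $w'\in\mathfrak{S}_q$, $w*w'=\sum uv$ over all words $u,v$ with $\mathrm{alph}(u)\cup\mathrm{alph}(v)=[p+q]$, $\mathrm{st}(u)=w$, $\mathrm{st}(v)=w'$; and for $w\in\mathfrak{S}_n$, $\Delta(w)=\sum_{i=0}^n\mathrm{st}(w|_{[1,i]})\otimes\mathrm{st}(w|_{[i+1,n]})$. Knuth equivalence $\equiv_{\mathrm{K}}$ on $\mathfrak{S}_n$ is generated by (SK1)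 $\dots xzy\dots\sim\dots zxy\dots$ for $x<y<z$ and (SK2) $\dots yxz\dots\sim\dots yzx\dots$ for $x<y<z$ (adjacent letters). Shifted Knuth equivalence $\equiv_{\mathrm{SK}}$ is generated by (SK1), (SK2) and (SK3): $xy\cdots\sim yx\cdots$ when $x,y$ are the first two letters of the permutation. $J_{\mathrm{K}}$ is the $\mathbb{Z}$-span of $u-v$ with $u\equiv_{\mathrm{K}}v$; it is a Hopf ideal, and $\mathsf{PR}=\mathbb{Z}\mathfrak{S}/J_{\mathrm{K}}$ is the Poirier–Reutenauer Hopf algebra. Since $J_{\mathrm{K}}\subseteq J_{\mathrm{SK}}$, $\mathsf{SPR}$ is a quotient of $\mathsf{PR}$. *)

theory Defs
  imports Main
begin

text \<open>Elements of the free Z-module on words are integer-valued functions on nat lists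
(finite support required where relevant). Permutations of size n are words over 1..n.\<close>

definition is_perm :: "nat list \<Rightarrow> bool" where
  "is_perm w \<longleftrightarrow> distinct w \<and> set w = {1..length w}"

definition st :: "nat list \<Rightarrow> nat list" where
  "st w = map (\<lambda>i. Suc (card {j. j < length w \<and> (w!j < w!i \<or> (w!j = w!i \<and> j < i))})) [0..<length w]"

definition restr :: "nat list \<Rightarrow> nat set \<Rightarrow> nat list" where
  "restr w I = filter (\<lambda>x. x \<in> I) w"

definition supp :: "('a \<Rightarrow> int) \<Rightarrow> 'a set" where
  "supp f = {x. f x \<noteq> 0}"

definition ZS :: "(nat list \<Rightarrow> int) set" where
  "ZS = {f. finite (supp f) \<and> (\<forall>w. f w \<noteq> 0 \<longrightarrow> is_perm w)}"

definition bas :: "nat list \<Rightarrow> (nat list \<Rightarrow> int)" where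
  "bas w = (\<lambda>x. if x = w then 1 else 0)"

definition mult_basis :: "nat list \<Rightarrow> nat list \<Rightarrow> nat list \<Rightarrow> int" where
  "mult_basis w w' x = int (card {(u, v). u @ v = x \<and>
       set u \<union> set v = {1..length w + length w'} \<and> st u = w \<and> st v = w'})"

definition mult :: "(nat list \<Rightarrow> int) \<Rightarrow> (nat list \<Rightarrow> int) \<Rightarrow> (nat list \<Rightarrow> int)" where
  "mult f g = (\<lambda>x. \<Sum>w\<in>supp f. \<Sum>w'\<in>supp g. f w * g w' * mult_basis w w' x)"

text \<open>Coproduct of a basis element, as a function on pairs (basis of ZS \<otimes> ZS).\<close>
definition coprod_basis :: "nat list \<Rightarrow> nat list \<times> nat list \<Rightarrow> int" where
  "coprod_basis w p = (\<Sum>i\<in>{0..length w}.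
      if p = (st (restr w {1..i}), st (restr w {i+1..length w})) then 1 else 0)"

definition coprod :: "(nat list \<Rightarrow> int) \<Rightarrow> (nat list \<times> nat list \<Rightarrow> int)" where
  "coprod f = (\<lambda>p. \<Sum>w\<in>supp f. f w * coprod_basis w p)"

definition counit :: "(nat list \<Rightarrow> int) \<Rightarrow> int" where
  "counit f = f []"

definition tensor :: "('a \<Rightarrow> int) \<Rightarrow> ('b \<Rightarrow> int) \<Rightarrow> ('a \<times> 'b \<Rightarrow> int)" where
  "tensor f g = (\<lambda>(x, y). f x * g y)"

inductive_set zspan :: "('a \<Rightarrow> int) set \<Rightarrow> ('a \<Rightarrow> int) set" for S where
  zero: "(\<lambda>_. 0) \<in> zspan S"
| gen: "s \<in> S \<Longrightarrow> s \<in> zspan S"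
| add: "a \<in> zspan S \<Longrightarrow> b \<in> zspan S \<Longrightarrow> (\<lambda>x. a x + b x) \<in> zspan S"
| neg: "a \<in> zspan S \<Longrightarrow> (\<lambda>x. - a x) \<in> zspan S"

definition knuth_step :: "nat list \<Rightarrow> nat list \<Rightarrow> bool" where
  "knuth_step u v \<longleftrightarrow> (\<exists>a b x y z. x < y \<and> y < z \<and>
      ((u = a @ [x, z, y] @ b \<and> v = a @ [z, x, y] @ b) \<or>
       (u = a @ [y, x, z] @ b \<and> v = a @ [y, z, x] @ b)))"

definition shifted_step :: "nat list \<Rightarrow> nat list \<Rightarrow> bool" where
  "shifted_step u v \<longleftrightarrow> knuth_step u v \<or> (\<exists>x y c. u = x # y # c \<and> v = y # x # c)"

definition knuth_equiv :: "nat list \<Rightarrow> nat list \<Rightarrow> bool" where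
  "knuth_equiv = equivclp knuth_step"

definition sk_equiv :: "nat list \<Rightarrow> nat list \<Rightarrow> bool" where
  "sk_equiv = equivclp shifted_step"

definition J_K :: "(nat list \<Rightarrow> int) set" where
  "J_K = zspan {(\<lambda>x. bas u x - bas v x) | u v.
      is_perm u \<and> is_perm v \<and> length u = length v \<and> knuth_equiv u v}"

definition J_SK :: "(nat list \<Rightarrow> int) set" where
  "J_SK = zspan {(\<lambda>x. bas u x - bas v x) | u v.
      is_perm u \<and> is_perm v \<and> length u = length v \<and> sk_equiv u v}"

end

theory Submission
  imports Defs
begin

(* All three operations are linear extensions of their values on basis permutations, and J_SK
   (resp. J_K) is spanned by differences of permutations one shifted Knuth move (resp. Knuth move)
   apart, so only such differences need to be treated.

   The terms of m * w' are the permutations x whose prefix of length |m| standardizes to m.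
   Relabelling that prefix so that it standardizes to a neighbour v of m is a bijection onto the
   terms of v * w', and it moves each term by one move: moves commute with order-preserving
   relabellings and survive appending letters on the right. Prepending letters preserves Knuth
   moves but not (SK3), which acts on the first two letters; this is why only J_K is allowed in the
   right factor.

   For the coproduct, a move exchanges the relative order of two letters, so in each term
   st(w|[1,i]) (x) st(w|[i+1,n]) at most one factor changes, and it changes by a move again,
   intervals being closed under taking the middle letter of a Knuth move. *)

section \<open>Integer spans and linear extensions\<close>

lemma zspan_sum:
  assumes "finite A" "\<And>a. a \<in> A \<Longrightarrow> F a \<in> zspan S"
  shows "(\<lambda>x. \<Sum>a\<in>A. F a x) \<in> zspan S"
  using assms
proof (induction A rule: finite_induct)
  case empty
  then show ?case by (simp add: zspan.zero)
next
  case (insert a A)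
  then show ?case using zspan.add[of "F a" S "\<lambda>x. \<Sum>a\<in>A. F a x"] by simp
qed

lemma zspan_smult:
  assumes "f \<in> zspan S" shows "(\<lambda>x. c * f x) \<in> zspan S"
proof -
  have nonneg: "(\<lambda>x. int n * f x) \<in> zspan S" for n
    using zspan_sum[of "{..<n}" "\<lambda>_. f" S] assms by simp
  show ?thesis
  proof (cases "c \<ge> 0")
    case True
    then show ?thesis using nonneg[of "nat c"] by simp
  next
    case False
    then show ?thesis using zspan.neg[OF nonneg[of "nat (- c)"]] by simp
  qed
qed

lemma zspan_finite_supp:
  assumes "\<And>s. s \<in> S \<Longrightarrow> finite (supp s)" "f \<in> zspan S"
  shows "finite (supp f)"
  using assms(2)
proof (induction rule: zspan.induct)
  case (add a b)
  have "supp (\<lambda>x. a x + b x) \<subseteq> supp a \<union> supp b" by (auto simp: supp_def)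
  then show ?case using add.IH by (meson finite_UnI finite_subset)
next
  case (neg a)
  then show ?case by (simp add: supp_def)
qed (simp_all add: assms(1) supp_def[symmetric], simp add: supp_def)

lemma zspan_eval_zero:
  assumes "\<And>s. s \<in> S \<Longrightarrow> s y = 0" "f \<in> zspan S"
  shows "f y = 0"
  using assms(2) by induction (simp_all add: assms(1))

lemma supp_bas_diff: "supp (\<lambda>x. bas u x - bas v x) \<subseteq> {u, v}"
  by (auto simp: supp_def bas_def)

definition lin_ext :: "('a \<Rightarrow> 'b \<Rightarrow> int) \<Rightarrow> ('a \<Rightarrow> int) \<Rightarrow> 'b \<Rightarrow> int" where
  "lin_ext K f = (\<lambda>y. \<Sum>w\<in>supp f. f w * K w y)"

lemma lin_ext_eq_sum:
  assumes "finite A" "supp f \<subseteq> A"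
  shows "lin_ext K f y = (\<Sum>w\<in>A. f w * K w y)"
  unfolding lin_ext_def
  by (rule sum.mono_neutral_left) (use assms in \<open>auto simp: supp_def\<close>)

lemma lin_ext_add:
  assumes "finite (supp f)" "finite (supp g)"
  shows "lin_ext K (\<lambda>x. f x + g x) = (\<lambda>y. lin_ext K f y + lin_ext K g y)"
proof
  fix y
  let ?A = "supp f \<union> supp g"
  have "finite ?A" "supp (\<lambda>x. f x + g x) \<subseteq> ?A" using assms by (auto simp: supp_def)
  then show "lin_ext K (\<lambda>x. f x + g x) y = lin_ext K f y + lin_ext K g y"
    by (simp add: lin_ext_eq_sum[of ?A] sum.distrib distrib_right)
qed

lemma lin_ext_neg: "lin_ext K (\<lambda>x. - f x) = (\<lambda>y. - lin_ext K f y)"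
  by (simp add: lin_ext_def supp_def sum_negf)

lemma lin_ext_bas_diff: "lin_ext K (\<lambda>x. bas u x - bas v x) = (\<lambda>y. K u y - K v y)"
proof (cases "u = v")
  case False
  then show ?thesis
    by (intro ext, subst lin_ext_eq_sum[OF _ supp_bas_diff]) (auto simp: bas_def)
qed (simp add: lin_ext_def supp_def)

lemma lin_ext_diff: "lin_ext K f y - lin_ext L f y = lin_ext (\<lambda>w y. K w y - L w y) f y"
  by (simp add: lin_ext_def sum_subtractf right_diff_distrib)

lemma lin_ext_in_zspan:
  assumes "finite (supp f)" "\<And>w. w \<in> supp f \<Longrightarrow> K w \<in> zspan T"
  shows "lin_ext K f \<in> zspan T"
  unfolding lin_ext_def by (rule zspan_sum[OF assms(1)]) (rule zspan_smult[OF assms(2)])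

lemma lin_ext_zspan:
  assumes "\<And>s. s \<in> S \<Longrightarrow> finite (supp s)" "\<And>s. s \<in> S \<Longrightarrow> lin_ext K s \<in> zspan T"
    and "f \<in> zspan S"
  shows "lin_ext K f \<in> zspan T"
  using assms(3)
proof (induction rule: zspan.induct)
  case zero
  then show ?case by (simp add: lin_ext_def supp_def zspan.zero)
next
  case (add a b)
  then show ?case
    using zspan_finite_supp[OF assms(1)] by (simp add: lin_ext_add zspan.add)
qed (simp_all add: assms(2) lin_ext_neg zspan.neg)

lemma equivclp_diff_in_zspan:
  assumes "equivclp R u v" "P u"
    and P_step: "\<And>a b. R a b \<Longrightarrow> P a \<longleftrightarrow> P b"
    and K_step: "\<And>a b. R a b \<Longrightarrow> P a \<Longrightarrow> (\<lambda>y. K a y - K b y) \<in> zspan T"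
  shows "(\<lambda>y. K u y - K v y) \<in> zspan T"
proof -
  have "(\<lambda>y. K u y - K v y) \<in> zspan T \<and> P v"
    using assms(1)
  proof (induction rule: equivclp_induct)
    case base
    then show ?case using assms(2) by (simp add: zspan.zero)
  next
    case (step a b)
    then have "(\<lambda>y. K a y - K b y) \<in> zspan T \<and> P b"
      using P_step K_step zspan.neg[OF K_step, of b a] by auto
    then show ?case
      using step.IH zspan.add[of "\<lambda>y. K u y - K a y" T "\<lambda>y. K a y - K b y"] by simp
  qed
  then show ?thesis ..
qed

lemma lin_ext_zspan_equivclp_diffs:
  assumes "f \<in> zspan {(\<lambda>x. bas u x - bas v x) | u v.
      is_perm u \<and> is_perm v \<and> length u = length v \<and> equivclp R u v}"
    and "\<And>u v. R u v \<Longrightarrow> is_perm u \<longleftrightarrow> is_perm v"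
    and "\<And>u v. R u v \<Longrightarrow> is_perm u \<Longrightarrow> (\<lambda>y. K u y - K v y) \<in> zspan T"
  shows "lin_ext K f \<in> zspan T"
  using assms(1)
proof (rule lin_ext_zspan[rotated 2])
  show "finite (supp s)" if "s \<in> {(\<lambda>x. bas u x - bas v x) | u v.
      is_perm u \<and> is_perm v \<and> length u = length v \<and> equivclp R u v}" for s
    using that finite_subset[OF supp_bas_diff] by blast
next
  fix s assume "s \<in> {(\<lambda>x. bas u x - bas v x) | u v.
      is_perm u \<and> is_perm v \<and> length u = length v \<and> equivclp R u v}"
  then obtain u v where s: "s = (\<lambda>x. bas u x - bas v x)" "is_perm u" "equivclp R u v"
    by blast
  have "(\<lambda>y. K u y - K v y) \<in> zspan T"
    using s(3,2) assms(2,3) by (rule equivclp_diff_in_zspan)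
  then show "lin_ext K s \<in> zspan T" using s(1) by (simp add: lin_ext_bas_diff)
qed

section \<open>Standardization and relabelling\<close>

definition rank :: "nat set \<Rightarrow> nat \<Rightarrow> nat" where
  "rank S a = card {b\<in>S. b < a}"

definition unrank :: "nat set \<Rightarrow> nat \<Rightarrow> nat" where
  "unrank S = inv_into S (\<lambda>a. Suc (rank S a))"

text \<open>\<^term>\<open>relabel u v\<close> is the word with standardization \<open>v\<close> written in the letters of \<open>u\<close>.\<close>

definition relabel :: "nat list \<Rightarrow> nat list \<Rightarrow> nat list" where
  "relabel u v = map (unrank (set u)) v"

lemma strict_mono_on_rank: "finite S \<Longrightarrow> strict_mono_on S (\<lambda>a. Suc (rank S a))"
  unfolding rank_def by (intro strict_mono_onI Suc_mono psubset_card_mono) auto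

lemma rank_image:
  assumes "finite S" shows "(\<lambda>a. Suc (rank S a)) ` S = {1..card S}"
proof -
  have "rank S a < card S" if "a \<in> S" for a
    unfolding rank_def using assms that by (intro psubset_card_mono) auto
  then have "(\<lambda>a. Suc (rank S a)) ` S \<subseteq> {1..card S}"
    by (auto simp: Suc_le_eq)
  moreover have "card ((\<lambda>a. Suc (rank S a)) ` S) = card {1..card S}"
    using strict_mono_on_imp_inj_on[OF strict_mono_on_rank[OF assms]] by (simp add: card_image)
  ultimately show ?thesis by (simp add: card_subset_eq)
qed

lemma strict_mono_on_unrank:
  assumes "finite S" shows "strict_mono_on {1..card S} (unrank S)"
proof (rule strict_mono_onI)
  let ?h = "\<lambda>a. Suc (rank S a)"
  have mono: "strict_mono_on S ?h" by (rule strict_mono_on_rank[OF assms])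
  have inv: "unrank S (?h c) = c" if "c \<in> S" for c
    unfolding unrank_def by (rule inv_into_f_f[OF strict_mono_on_imp_inj_on[OF mono] that])
  fix i j assume "i \<in> {1..card S}" "j \<in> {1..card S}" "i < j"
  then have "i \<in> ?h ` S" "j \<in> ?h ` S" "i < j" by (simp_all add: rank_image[OF assms])
  then obtain a b where "a \<in> S" "b \<in> S" "i = ?h a" "j = ?h b" "?h a < ?h b"
    by blast
  then show "unrank S i < unrank S j"
    using strict_mono_on_less[OF mono] inv by simp
qed

lemma st_length [simp]: "length (st w) = length w"
  by (simp add: st_def)

lemma st_map_strict_mono:
  assumes "strict_mono_on (set w) f"
  shows "st (map f w) = st w"
proof -
  have "f (w!j) < f (w!i) \<longleftrightarrow> w!j < w!i" "f (w!j) = f (w!i) \<longleftrightarrow> w!j = w!i"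
    if "i < length w" "j < length w" for i j
    using that strict_mono_on_less[OF assms] strict_mono_on_eq[OF assms] by auto
  then show ?thesis
    unfolding st_def by (auto intro!: arg_cong[where f = card])
qed

lemma st_distinct:
  assumes "distinct w" shows "st w = map (\<lambda>a. Suc (rank (set w) a)) w"
proof (rule nth_equalityI)
  fix i assume i: "i < length (st w)"
  have "{j. j < length w \<and> (w!j < w!i \<or> (w!j = w!i \<and> j < i))} = {j. j < length w \<and> w!j < w!i}"
    using assms i by (auto simp: nth_eq_iff_index_eq)
  moreover have "card {j. j < length w \<and> w!j < w!i} = card {b\<in>set w. b < w!i}"
  proof -
    have "{b\<in>set w. b < w!i} = (!) w ` {j. j < length w \<and> w!j < w!i}"
      by (auto simp: in_set_conv_nth)
    then show ?thesis
      using assms by (simp add: card_image inj_on_def nth_eq_iff_index_eq)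
  qed
  ultimately show "st w ! i = map (\<lambda>a. Suc (rank (set w) a)) w ! i"
    using i by (simp add: st_def rank_def)
qed simp

lemma is_perm_st: "distinct w \<Longrightarrow> is_perm (st w)"
  by (simp add: st_distinct is_perm_def distinct_map rank_image distinct_card
      strict_mono_on_imp_inj_on[OF strict_mono_on_rank])

lemma st_is_perm:
  assumes "is_perm v" shows "st v = v"
proof -
  have rank_eq: "Suc (rank (set v) a) = a" if "a \<in> set v" for a
  proof -
    have "{b \<in> set v. b < a} = {1..<a}" using assms that by (auto simp: is_perm_def)
    then show ?thesis using assms that by (auto simp: rank_def is_perm_def)
  qed
  have "distinct v" using assms by (simp add: is_perm_def)
  then have "st v = map (\<lambda>a. Suc (rank (set v) a)) v" by (rule st_distinct)
  also have "\<dots> = v" by (rule map_idI) (rule rank_eq)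
  finally show ?thesis .
qed

lemma is_perm_if_set_eq:
  assumes "is_perm x" "distinct y" "set y = set x" shows "is_perm y"
proof -
  have "length y = length x"
    using assms distinct_card[of x] distinct_card[of y] by (simp add: is_perm_def)
  then show ?thesis using assms by (simp add: is_perm_def)
qed

lemma unrank_image: "finite S \<Longrightarrow> unrank S ` {1..card S} = S"
  unfolding unrank_def
  by (metis rank_image inv_into_image_cancel strict_mono_on_imp_inj_on strict_mono_on_rank order_refl)

lemma set_st: "distinct u \<Longrightarrow> set (st u) = {1..card (set u)}"
  using is_perm_st by (simp add: is_perm_def distinct_card)

lemma relabel_st:
  assumes "distinct u" shows "relabel u (st u) = u"
proof -
  have "unrank (set u) (Suc (rank (set u) a)) = a" if "a \<in> set u" for a
    unfolding unrank_def
    by (rule inv_into_f_f[OF strict_mono_on_imp_inj_on[OF strict_mono_on_rank] that]) simp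
  then show ?thesis using assms by (simp add: relabel_def st_distinct map_idI)
qed

lemma
  assumes "distinct u" "is_perm v" "length v = length u"
  shows set_relabel: "set (relabel u v) = set u"
    and distinct_relabel: "distinct (relabel u v)"
    and st_relabel: "st (relabel u v) = v"
proof -
  have sv: "set v = {1..card (set u)}"
    using assms by (simp add: is_perm_def distinct_card)
  then have mono: "strict_mono_on (set v) (unrank (set u))"
    using strict_mono_on_unrank by simp
  show "set (relabel u v) = set u" using sv unrank_image by (simp add: relabel_def)
  show "distinct (relabel u v)"
    using assms(2) strict_mono_on_imp_inj_on[OF mono] by (simp add: relabel_def is_perm_def distinct_map)
  show "st (relabel u v) = v"
    using st_map_strict_mono[OF mono] st_is_perm[OF assms(2)] by (simp add: relabel_def)
qed

lemma relabel_step: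
  assumes R_map: "\<And>a b f. R a b \<Longrightarrow> strict_mono_on (set a) f \<Longrightarrow> R (map f a) (map f b)"
    and "R (st u) v" "distinct u"
  shows "R u (relabel u v)"
proof -
  have "strict_mono_on (set (st u)) (unrank (set u))"
    using strict_mono_on_unrank set_st[OF assms(3)] by simp
  then have "R (relabel u (st u)) (relabel u v)"
    unfolding relabel_def using R_map assms(2) by blast
  then show ?thesis using relabel_st[OF assms(3)] by simp
qed

section \<open>Knuth moves\<close>

lemma knuth_step_map:
  assumes "knuth_step u v" "strict_mono_on (set u) f"
  shows "knuth_step (map f u) (map f v)"
proof -
  obtain a b x y z where "x < y" "y < z" and uv:
    "(u = a @ [x, z, y] @ b \<and> v = a @ [z, x, y] @ b) \<or> (u = a @ [y, x, z] @ b \<and> v = a @ [y, z, x] @ b)"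
    using assms(1) unfolding knuth_step_def by blast
  moreover have "x \<in> set u" "y \<in> set u" "z \<in> set u" using uv by auto
  ultimately have "f x < f y" "f y < f z" using strict_mono_onD[OF assms(2)] by auto
  with uv show ?thesis
    unfolding knuth_step_def
    by (intro exI[of _ "map f a"] exI[of _ "map f b"] exI[of _ "f x"] exI[of _ "f y"] exI[of _ "f z"])
      auto
qed

lemma shifted_step_map:
  "shifted_step u v \<Longrightarrow> strict_mono_on (set u) f \<Longrightarrow> shifted_step (map f u) (map f v)"
  unfolding shifted_step_def using knuth_step_map by fastforce

lemma knuth_step_append:
  assumes "knuth_step u v"
  shows knuth_step_append_left: "knuth_step (c @ u) (c @ v)"
    and knuth_step_append_right: "knuth_step (u @ c) (v @ c)"
proof -
  obtain a b x y z where xyz: "x < y" "y < z" and uv: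
    "(u = a @ [x, z, y] @ b \<and> v = a @ [z, x, y] @ b) \<or> (u = a @ [y, x, z] @ b \<and> v = a @ [y, z, x] @ b)"
    using assms unfolding knuth_step_def by blast
  show "knuth_step (c @ u) (c @ v)"
    unfolding knuth_step_def
    by (intro exI[of _ "c @ a"] exI[of _ b] exI[of _ x] exI[of _ y] exI[of _ z]) (use xyz uv in auto)
  show "knuth_step (u @ c) (v @ c)"
    unfolding knuth_step_def
    by (intro exI[of _ a] exI[of _ "b @ c"] exI[of _ x] exI[of _ y] exI[of _ z]) (use xyz uv in auto)
qed

lemma shifted_step_append_right: "shifted_step u v \<Longrightarrow> shifted_step (u @ c) (v @ c)"
  unfolding shifted_step_def using knuth_step_append_right by auto

lemma knuth_step_imp_shifted_step: "knuth_step u v \<Longrightarrow> shifted_step u v"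
  by (simp add: shifted_step_def)

lemma shifted_step_set_length:
  assumes "shifted_step u v" shows "set v = set u" "length v = length u"
  using assms unfolding shifted_step_def knuth_step_def by auto

lemma distinct_iff_set_length_eq:
  "set v = set u \<Longrightarrow> length v = length u \<Longrightarrow> distinct v \<longleftrightarrow> distinct u"
  using card_distinct distinct_card by metis

lemma shifted_step_is_perm:
  assumes "shifted_step u v" shows "is_perm u \<longleftrightarrow> is_perm v"
  using shifted_step_set_length[OF assms] distinct_iff_set_length_eq
  unfolding is_perm_def by metis

lemma knuth_step_is_perm: "knuth_step u v \<Longrightarrow> is_perm u \<longleftrightarrow> is_perm v"
  by (rule shifted_step_is_perm[OF knuth_step_imp_shifted_step])

lemma st_shifted_step:
  assumes "shifted_step s t" "distinct s"
  shows "shifted_step (st s) (st t)"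
proof -
  have "set t = set s" "length t = length s" by (rule shifted_step_set_length[OF assms(1)])+
  then have "distinct t" using assms(2) distinct_iff_set_length_eq by blast
  then have "st t = map (\<lambda>a. Suc (rank (set s) a)) t"
    using st_distinct \<open>set t = set s\<close> by metis
  then show ?thesis
    using shifted_step_map[OF assms(1) strict_mono_on_rank] st_distinct[OF assms(2)] by simp
qed

lemma shifted_stepE:
  assumes "shifted_step m v"
  obtains (knuth) a b x y z where "x < y" "y < z"
      "(m = a @ [x, z, y] @ b \<and> v = a @ [z, x, y] @ b) \<or> (m = a @ [y, x, z] @ b \<and> v = a @ [y, z, x] @ b)"
    | (swap) x y c where "m = x # y # c" "v = y # x # c"
  using assms unfolding shifted_step_def knuth_step_def by blast

lemma shifted_step_moves_two_letters:
  assumes "shifted_step m v"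
  obtains x z where "x \<noteq> z" "\<And>I. restr m I \<noteq> restr v I \<Longrightarrow> x \<in> I \<and> z \<in> I"
  using assms
proof (cases rule: shifted_stepE)
  case (knuth a b x y z)
  then show ?thesis by (intro that[of x z]) (auto simp: restr_def split: if_splits)
next
  case (swap x y c)
  show ?thesis
  proof (cases "x = y")
    case True
    then show ?thesis using swap by (intro that[of 0 1]) auto
  next
    case False
    then show ?thesis using swap by (intro that[of x y]) (auto simp: restr_def split: if_splits)
  qed
qed

lemma shifted_step_restr_disjoint:
  assumes "shifted_step m v" "I \<inter> J = {}"
  shows "restr m I = restr v I \<or> restr m J = restr v J"
proof -
  obtain x z where "x \<noteq> z" "\<And>I. restr m I \<noteq> restr v I \<Longrightarrow> x \<in> I \<and> z \<in> I"
    using shifted_step_moves_two_letters[OF assms(1)] by blast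
  then show ?thesis using assms(2) by blast
qed

lemma shifted_step_restr_interval:
  assumes "shifted_step m v"
  shows "restr m {lo..hi} = restr v {lo..hi} \<or> shifted_step (restr m {lo..hi}) (restr v {lo..hi})"
proof -
  let ?P = "\<lambda>t. t \<in> {lo..hi}"
  from assms show ?thesis
  proof (cases rule: shifted_stepE)
    case (knuth a b x y z)
    show ?thesis
    proof (cases "?P x \<and> ?P z")
      case True
      then have "?P y" using knuth by auto
      then have "knuth_step (restr m {lo..hi}) (restr v {lo..hi})"
        unfolding knuth_step_def restr_def
        by (intro exI[of _ "filter ?P a"] exI[of _ "filter ?P b"] exI[of _ x] exI[of _ y] exI[of _ z])
          (use knuth True in auto)
      then show ?thesis by (simp add: shifted_step_def)
    next
      case False
      then show ?thesis using knuth by (auto simp: restr_def)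
    qed
  next
    case (swap x y c)
    then show ?thesis by (auto simp: restr_def shifted_step_def)
  qed
qed

section \<open>The product\<close>

definition product_terms :: "nat list \<Rightarrow> nat list \<Rightarrow> nat list set" where
  "product_terms w w' = {x. is_perm x \<and> st (take (length w) x) = w \<and> st (drop (length w) x) = w'}"

lemma length_product_terms:
  assumes "x \<in> product_terms w w'" shows "length x = length w + length w'"
proof -
  have "length (st (take (length w) x)) = length w" "length (st (drop (length w) x)) = length w'"
    using assms by (simp_all add: product_terms_def)
  then show ?thesis by simp
qed

lemma finite_product_terms: "finite (product_terms w w')"
proof (rule finite_subset)
  let ?N = "length w + length w'"
  show "product_terms w w' \<subseteq> {x. set x \<subseteq> {1..?N} \<and> length x = ?N}"
    using length_product_terms by (force simp: product_terms_def is_perm_def)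
qed (rule finite_lists_length_eq, simp)

lemma mult_basis_eq: "mult_basis w w' x = of_bool (x \<in> product_terms w w')"
proof -
  let ?p = "length w" and ?N = "length w + length w'"
  have "u @ v = x \<and> set u \<union> set v = {1..?N} \<and> st u = w \<and> st v = w' \<longleftrightarrow>
      u = take ?p x \<and> v = drop ?p x \<and> x \<in> product_terms w w'" for u v
  proof
    assume "u @ v = x \<and> set u \<union> set v = {1..?N} \<and> st u = w \<and> st v = w'"
    then have x: "x = u @ v" and w: "w = st u" "w' = st v" and "set (u @ v) = {1..length (u @ v)}"
      by auto
    then have "is_perm x" using card_distinct[of x] by (simp add: is_perm_def)
    then show "u = take ?p x \<and> v = drop ?p x \<and> x \<in> product_terms w w'"
      unfolding x w product_terms_def by simp
  next
    assume "u = take ?p x \<and> v = drop ?p x \<and> x \<in> product_terms w w'"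
    then have uv: "x = u @ v" and x: "x \<in> product_terms w w'" and "st u = w" "st v = w'"
      by (auto simp: product_terms_def)
    moreover have "set x = {1..?N}"
      using x length_product_terms[OF x] by (simp add: product_terms_def is_perm_def)
    ultimately show "u @ v = x \<and> set u \<union> set v = {1..?N} \<and> st u = w \<and> st v = w'"
      by simp
  qed
  then have "{(u, v). u @ v = x \<and> set u \<union> set v = {1..?N} \<and> st u = w \<and> st v = w'} =
      (if x \<in> product_terms w w' then {(take ?p x, drop ?p x)} else {})"
    by auto
  then show ?thesis by (simp add: mult_basis_def)
qed

definition relabel_prefix :: "nat list \<Rightarrow> nat list \<Rightarrow> nat list" where
  "relabel_prefix v x = relabel (take (length v) x) v @ drop (length v) x"

definition relabel_suffix :: "nat list \<Rightarrow> nat list \<Rightarrow> nat list" where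
  "relabel_suffix v x = take (length x - length v) x @ relabel (drop (length x - length v) x) v"

lemma relabel_relabel:
  assumes "distinct u" "is_perm v" "length v = length u"
  shows "relabel (relabel u v) (st u) = u"
  using relabel_st[OF assms(1)] set_relabel[OF assms] by (simp add: relabel_def)

lemma relabel_prefix_product_terms:
  assumes x: "x \<in> product_terms m w'" and v: "is_perm v" "length v = length m"
  shows "relabel_prefix v x \<in> product_terms v w'" "relabel_prefix m (relabel_prefix v x) = x"
proof -
  define u c where "u = take (length m) x" and "c = drop (length m) x"
  have xuc: "x = u @ c" by (simp add: u_def c_def)
  have px: "is_perm x" and su: "st u = m" and sc: "st c = w'"
    using x by (simp_all add: product_terms_def u_def c_def)
  then have du: "distinct u" "distinct c" "set u \<inter> set c = {}"
    using xuc by (simp_all add: is_perm_def)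
  have lu: "length v = length u" using su v(2) st_length[of u] by simp
  have y: "relabel_prefix v x = relabel u v @ c"
    using v(2) by (simp add: relabel_prefix_def u_def c_def)
  have "is_perm (relabel u v @ c)"
    using is_perm_if_set_eq[OF px] du set_relabel[OF du(1) v(1) lu] distinct_relabel[OF du(1) v(1) lu]
    by (simp add: xuc)
  then show "relabel_prefix v x \<in> product_terms v w'"
    using y sc st_relabel[OF du(1) v(1) lu] by (simp add: product_terms_def relabel_def)
  show "relabel_prefix m (relabel_prefix v x) = x"
    using y v(2) relabel_relabel[OF du(1) v(1) lu] su xuc by (simp add: relabel_prefix_def relabel_def)
qed

lemma relabel_suffix_product_terms:
  assumes x: "x \<in> product_terms w u0" and v: "is_perm v" "length v = length u0"
  shows "relabel_suffix v x \<in> product_terms w v" "relabel_suffix u0 (relabel_suffix v x) = x"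
proof -
  define a u where "a = take (length w) x" and "u = drop (length w) x"
  have xau: "x = a @ u" by (simp add: a_def u_def)
  have px: "is_perm x" and sa: "st a = w" and su: "st u = u0"
    using x by (simp_all add: product_terms_def a_def u_def)
  then have du: "distinct a" "distinct u" "set a \<inter> set u = {}"
    using xau by (simp_all add: is_perm_def)
  have lu: "length v = length u" using su v(2) st_length[of u] by simp
  have la: "length a = length w" using sa st_length[of a] by simp
  have y: "relabel_suffix v x = a @ relabel u v"
    using lu la by (simp add: relabel_suffix_def xau)
  have "is_perm (a @ relabel u v)"
    using is_perm_if_set_eq[OF px] du set_relabel[OF du(2) v(1) lu] distinct_relabel[OF du(2) v(1) lu]
    by (simp add: xau)
  then show "relabel_suffix v x \<in> product_terms w v"
    using y sa la st_relabel[OF du(2) v(1) lu] by (simp add: product_terms_def)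
  show "relabel_suffix u0 (relabel_suffix v x) = x"
    using y la lu v(2) relabel_relabel[OF du(2) v(1) lu] su xau
    by (simp add: relabel_suffix_def relabel_def)
qed

lemma shifted_step_relabel_prefix:
  assumes x: "x \<in> product_terms m w'" and step: "shifted_step m v"
  shows "shifted_step x (relabel_prefix v x)"
proof -
  define u where "u = take (length m) x"
  have "st u = m" "distinct u"
    using x by (auto simp: product_terms_def is_perm_def u_def intro: distinct_take)
  then have "shifted_step u (relabel u v)"
    using relabel_step[where R = shifted_step, OF shifted_step_map] step by blast
  then have "shifted_step (u @ drop (length m) x) (relabel u v @ drop (length m) x)"
    by (rule shifted_step_append_right)
  then show ?thesis
    using shifted_step_set_length(2)[OF step] by (simp add: relabel_prefix_def u_def)
qed

lemma knuth_step_relabel_suffix: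
  assumes x: "x \<in> product_terms w u0" and step: "knuth_step u0 v"
  shows "knuth_step x (relabel_suffix v x)"
proof -
  define u where "u = drop (length w) x"
  have "st u = u0" "distinct u"
    using x by (auto simp: product_terms_def is_perm_def u_def intro: distinct_drop)
  then have "knuth_step u (relabel u v)"
    using relabel_step[where R = knuth_step, OF knuth_step_map] step by blast
  then have "knuth_step (take (length w) x @ u) (take (length w) x @ relabel u v)"
    by (rule knuth_step_append_left)
  moreover have "length x - length v = length w"
    using length_product_terms[OF x] shifted_step_set_length(2)[OF knuth_step_imp_shifted_step[OF step]]
    by simp
  ultimately show ?thesis by (simp add: relabel_suffix_def u_def)
qed

lemma of_bool_diff_in_zspan:
  assumes "finite A" "bij_betw \<Psi> A B" "\<And>x. x \<in> A \<Longrightarrow> (\<lambda>y. bas x y - bas (\<Psi> x) y) \<in> zspan T"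
  shows "(\<lambda>y. of_bool (y \<in> A) - of_bool (y \<in> B) :: int) \<in> zspan T"
proof -
  have "(\<Sum>x\<in>A. bas x y - bas (\<Psi> x) y) = of_bool (y \<in> A) - of_bool (y \<in> B)" for y
  proof -
    have "(\<Sum>x\<in>A. bas (\<Psi> x) y) = (\<Sum>z\<in>B. bas z y)"
      by (rule sum.reindex_bij_betw[OF assms(2)])
    then show ?thesis
      using assms(1) bij_betw_finite[OF assms(2)] by (simp add: sum_subtractf bas_def)
  qed
  then show ?thesis using zspan_sum[OF assms(1), of "\<lambda>x y. bas x y - bas (\<Psi> x) y"] assms(3)
    by simp
qed

lemma bas_diff_in_J_SK:
  assumes "shifted_step u v" "is_perm u"
  shows "(\<lambda>x. bas u x - bas v x) \<in> J_SK"
proof -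
  have "is_perm v" "length u = length v" "sk_equiv u v"
    using assms shifted_step_is_perm shifted_step_set_length
    by (auto simp: sk_equiv_def intro: r_into_equivclp)
  then show ?thesis unfolding J_SK_def using assms(2) by (intro zspan.gen) blast
qed

lemma mult_basis_diff_shifted_step:
  assumes "shifted_step m v" "is_perm m"
  shows "(\<lambda>x. mult_basis m w' x - mult_basis v w' x) \<in> J_SK"
proof -
  have v: "is_perm v" "length v = length m" "length m = length v"
    using assms shifted_step_is_perm shifted_step_set_length by auto
  have "bij_betw (relabel_prefix v) (product_terms m w') (product_terms v w')"
    using relabel_prefix_product_terms[OF _ v(1,2)] relabel_prefix_product_terms[OF _ assms(2) v(3)]
    by (intro bij_betw_byWitness[where f' = "relabel_prefix m"]) auto
  moreover have "(\<lambda>y. bas x y - bas (relabel_prefix v x) y) \<in> J_SK" if "x \<in> product_terms m w'" for x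
    using bas_diff_in_J_SK shifted_step_relabel_prefix[OF that assms(1)] that
    by (simp add: product_terms_def)
  ultimately show ?thesis
    using of_bool_diff_in_zspan[OF finite_product_terms] unfolding J_SK_def mult_basis_eq by blast
qed

lemma mult_basis_diff_knuth_step:
  assumes "knuth_step u v" "is_perm u"
  shows "(\<lambda>x. mult_basis w u x - mult_basis w v x) \<in> J_SK"
proof -
  have v: "is_perm v" "length v = length u" "length u = length v"
    using assms knuth_step_is_perm shifted_step_set_length[OF knuth_step_imp_shifted_step] by auto
  have "bij_betw (relabel_suffix v) (product_terms w u) (product_terms w v)"
    using relabel_suffix_product_terms[OF _ v(1,2)] relabel_suffix_product_terms[OF _ assms(2) v(3)]
    by (intro bij_betw_byWitness[where f' = "relabel_suffix u"]) auto
  moreover have "(\<lambda>y. bas x y - bas (relabel_suffix v x) y) \<in> J_SK" if "x \<in> product_terms w u" for x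
    using bas_diff_in_J_SK knuth_step_imp_shifted_step knuth_step_relabel_suffix[OF that assms(1)] that
    by (simp add: product_terms_def)
  ultimately show ?thesis
    using of_bool_diff_in_zspan[OF finite_product_terms] unfolding J_SK_def mult_basis_eq by blast
qed

lemma mult_eq_lin_ext_left: "mult f g = lin_ext (\<lambda>w. lin_ext (mult_basis w) g) f"
  unfolding mult_def lin_ext_def by (simp add: sum_distrib_left mult.assoc)

lemma mult_eq_lin_ext_right: "mult f g = lin_ext (\<lambda>w'. lin_ext (\<lambda>w. mult_basis w w') f) g"
  unfolding mult_def lin_ext_def by (subst sum.swap) (simp add: sum_distrib_left algebra_simps)

lemma mult_J_SK_ZS:
  assumes a: "a \<in> J_SK" and b: "b \<in> ZS"
  shows "mult a b \<in> J_SK"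
proof -
  have "(\<lambda>y. lin_ext (mult_basis u) b y - lin_ext (mult_basis v) b y) \<in> J_SK"
    if "shifted_step u v" "is_perm u" for u v
    unfolding lin_ext_diff J_SK_def
    by (rule lin_ext_in_zspan)
      (use b mult_basis_diff_shifted_step[OF that] in \<open>simp_all add: ZS_def J_SK_def\<close>)
  then show ?thesis
    using a shifted_step_is_perm unfolding mult_eq_lin_ext_left J_SK_def sk_equiv_def
    by (intro lin_ext_zspan_equivclp_diffs[where R = shifted_step]) auto
qed

lemma mult_ZS_J_K:
  assumes a: "a \<in> ZS" and b: "b \<in> J_K"
  shows "mult a b \<in> J_SK"
proof -
  have "(\<lambda>y. lin_ext (\<lambda>w. mult_basis w u) a y - lin_ext (\<lambda>w. mult_basis w v) a y) \<in> J_SK"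
    if "knuth_step u v" "is_perm u" for u v
    unfolding lin_ext_diff J_SK_def
    by (rule lin_ext_in_zspan)
      (use a mult_basis_diff_knuth_step[OF that] in \<open>simp_all add: ZS_def J_SK_def\<close>)
  then show ?thesis
    using b knuth_step_is_perm unfolding mult_eq_lin_ext_right J_K_def knuth_equiv_def J_SK_def
    by (intro lin_ext_zspan_equivclp_diffs[where R = knuth_step]) auto
qed

section \<open>The coproduct\<close>

definition coideal_span :: "(nat list \<Rightarrow> int) set \<Rightarrow> (nat list \<times> nat list \<Rightarrow> int) set" where
  "coideal_span J = zspan ({tensor j b | j b. j \<in> J \<and> b \<in> ZS} \<union> {tensor b j | j b. j \<in> J \<and> b \<in> ZS})"

definition deconcat_term :: "nat list \<Rightarrow> nat \<Rightarrow> nat list \<times> nat list \<Rightarrow> int" where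
  "deconcat_term w i = tensor (bas (st (restr w {1..i}))) (bas (st (restr w {i+1..length w})))"

lemma coprod_basis_eq_sum: "coprod_basis w p = (\<Sum>i\<in>{0..length w}. deconcat_term w i p)"
  unfolding coprod_basis_def deconcat_term_def tensor_def bas_def
  by (rule sum.cong) (auto split: prod.split)

lemma bas_in_ZS: "is_perm w \<Longrightarrow> bas w \<in> ZS"
  unfolding ZS_def supp_def bas_def by auto

lemma bas_st_restr_in_ZS: "distinct m \<Longrightarrow> bas (st (restr m I)) \<in> ZS"
  by (simp add: bas_in_ZS is_perm_st restr_def)

lemma bas_diff_st_restr_in_J_SK:
  assumes "shifted_step m v" "distinct m"
  shows "(\<lambda>x. bas (st (restr m {lo..hi})) x - bas (st (restr v {lo..hi})) x) \<in> J_SK"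
  using shifted_step_restr_interval[OF assms(1)]
proof
  assume "shifted_step (restr m {lo..hi}) (restr v {lo..hi})"
  then show ?thesis using assms(2)
    by (intro bas_diff_in_J_SK st_shifted_step) (simp_all add: is_perm_st restr_def)
qed (simp add: J_SK_def zspan.zero)

lemma tensor_in_coideal_span:
  assumes "j \<in> J" "b \<in> ZS"
  shows "tensor j b \<in> coideal_span J" "tensor b j \<in> coideal_span J"
  unfolding coideal_span_def using assms by (blast intro: zspan.gen)+

lemma deconcat_term_diff:
  assumes "shifted_step m v" "is_perm m"
  shows "(\<lambda>p. deconcat_term m i p - deconcat_term v i p) \<in> coideal_span J_SK"
proof -
  let ?n = "length m"
  let ?A = "bas (st (restr m {1..i}))" and ?A' = "bas (st (restr v {1..i}))"
  let ?B = "bas (st (restr m {i+1..?n}))" and ?B' = "bas (st (restr v {i+1..?n}))"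
  have dm: "distinct m" using assms(2) by (simp add: is_perm_def)
  have lv: "length v = ?n" using shifted_step_set_length(2)[OF assms(1)] .
  have eq: "(\<lambda>p. deconcat_term m i p - deconcat_term v i p) = (\<lambda>p. tensor ?A ?B p - tensor ?A' ?B' p)"
    by (simp add: deconcat_term_def lv)
  have "restr m {1..i} = restr v {1..i} \<or> restr m {i+1..?n} = restr v {i+1..?n}"
    by (rule shifted_step_restr_disjoint[OF assms(1)]) auto
  then show ?thesis
  proof
    assume "restr m {1..i} = restr v {1..i}"
    then have "(\<lambda>p. tensor ?A ?B p - tensor ?A' ?B' p) = tensor ?A (\<lambda>x. ?B x - ?B' x)"
      by (auto simp: tensor_def right_diff_distrib)
    then show ?thesis
      unfolding eq using tensor_in_coideal_span(2)[OF bas_diff_st_restr_in_J_SK[OF assms(1) dm]]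
        bas_st_restr_in_ZS[OF dm] by simp
  next
    assume "restr m {i+1..?n} = restr v {i+1..?n}"
    then have "(\<lambda>p. tensor ?A ?B p - tensor ?A' ?B' p) = tensor (\<lambda>x. ?A x - ?A' x) ?B"
      by (auto simp: tensor_def left_diff_distrib)
    then show ?thesis
      unfolding eq using tensor_in_coideal_span(1)[OF bas_diff_st_restr_in_J_SK[OF assms(1) dm]]
        bas_st_restr_in_ZS[OF dm] by simp
  qed
qed

lemma coprod_basis_diff:
  assumes "shifted_step m v" "is_perm m"
  shows "(\<lambda>p. coprod_basis m p - coprod_basis v p) \<in> coideal_span J_SK"
proof -
  have "length v = length m" using shifted_step_set_length(2)[OF assms(1)] .
  then have "(\<lambda>p. coprod_basis m p - coprod_basis v p) =
      (\<lambda>p. \<Sum>i\<in>{0..length m}. deconcat_term m i p - deconcat_term v i p)"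
    by (simp add: coprod_basis_eq_sum sum_subtractf)
  also have "\<dots> \<in> coideal_span J_SK"
    unfolding coideal_span_def
    by (rule zspan_sum) (simp_all add: deconcat_term_diff[OF assms, unfolded coideal_span_def])
  finally show ?thesis .
qed

lemma coprod_J_SK:
  assumes "a \<in> J_SK" shows "coprod a \<in> coideal_span J_SK"
proof -
  have "coprod a = lin_ext coprod_basis a" by (simp add: coprod_def lin_ext_def)
  also have "\<dots> \<in> coideal_span J_SK"
    using assms[unfolded J_SK_def sk_equiv_def] coprod_basis_diff[unfolded coideal_span_def]
      shifted_step_is_perm
    unfolding coideal_span_def by (intro lin_ext_zspan_equivclp_diffs[where R = shifted_step]) auto
  finally show ?thesis .
qed

lemma counit_J_SK:
  assumes "a \<in> J_SK" shows "counit a = 0"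
  using assms unfolding J_SK_def counit_def
  by (rule zspan_eval_zero[rotated]) (auto simp: bas_def)

theorem theorem4p1:
  shows "(\<forall>a\<in>J_SK. \<forall>b\<in>ZS. mult a b \<in> J_SK)
       \<and> (\<forall>a\<in>J_SK. coprod a \<in> zspan ({tensor j b | j b. j \<in> J_SK \<and> b \<in> ZS}
                                        \<union> {tensor b j | j b. j \<in> J_SK \<and> b \<in> ZS})
                  \<and> counit a = 0)
       \<and> (\<forall>a\<in>ZS. \<forall>b\<in>J_K. mult a b \<in> J_SK)"
  using mult_J_SK_ZS coprod_J_SK counit_J_SK mult_ZS_J_K unfolding coideal_span_def by blast

end
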